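(* Let $G$ be a finite simple graph, $P$ a pebble distribution, and $U$ a unit distribution of nonzero size on a vertex $u$, disjoint from $P$. Let $c$ be a cooperation vertex such that, under $P+U$, a pebbling move removing pebbles from $c$ can be made after some pebbling sequence (i.e. $c$ is $2$-reachable under $P+U$). Then either $c$ has two neighbors $e,f$ each with cooperation excess at least $1$ and with $M(e)<M(c)$, $M(f)<M(c)$, or $c$ has a neighbor $d$ with cooperation excess at least $3$ and $M(d)<M(c)$.
   Context: A pebble distribution is a function $V(G)\to\mathbb{Z}_{\geq0}$; $(P+U)(v)=P(v)+U(v)$. A pebbling move removes two pebbles from a vertex and adds one to an adjacent vertex; a pebbling sequence is an executable sequence of moves, and $(P+U)_\sigma$ is the result of applying $\sigma$. A vertex $v$ is $k$-reachable under a distribution if some pebbling sequence yields at least $k$ pebbles on $v$; reachable means $1$-reachable. $\mathrm{reach}(P,v)$ is the largest such $k$; $\mathrm{exc}(P,v)=\mathrm{reach}(P,v)-1$ if $v$ is reachable, else $0$. A cooperation vertex is reachable under $P+U$ but under neither $P$ nor $U$. The cooperation excess of $v$ is $\mathrm{exc}(P+U,v)-\mathrm{exc}(P,v)-\mathrm{exc}(U,v)$. A vertex is utilized by a pebbling sequence if some move of it removes or adds a pebble at that vertex. $M(v)$ is the minimum, over pebbling sequences $\sigma$ from $P+U$ with $(P+U)_\sigma(v)\geq 2$, of the number of cooperation vertices utilized by $\sigma$ (counting $v$ if it is a cooperation vertex); $M(v)=\infty$ if $v$ is not $2$-reachable under $P+U$. *)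

theory Defs
  imports Main "HOL-Library.Extended_Nat"
begin

definition simple_graph :: "'a set \<Rightarrow> ('a \<Rightarrow> 'a \<Rightarrow> bool) \<Rightarrow> bool" where
  "simple_graph V E \<longleftrightarrow> finite V \<and> (\<forall>x y. E x y \<longrightarrow> x \<in> V \<and> y \<in> V)
     \<and> (\<forall>x y. E x y \<longrightarrow> E y x) \<and> (\<forall>x. \<not> E x x)"

definition dist_on :: "'a set \<Rightarrow> ('a \<Rightarrow> nat) \<Rightarrow> bool" where
  "dist_on V P \<longleftrightarrow> (\<forall>x. x \<notin> V \<longrightarrow> P x = 0)"

definition dplus :: "('a \<Rightarrow> nat) \<Rightarrow> ('a \<Rightarrow> nat) \<Rightarrow> ('a \<Rightarrow> nat)" where
  "dplus P U = (\<lambda>v. P v + U v)"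

definition move :: "('a \<Rightarrow> nat) \<Rightarrow> 'a \<Rightarrow> 'a \<Rightarrow> ('a \<Rightarrow> nat)" where
  "move P x y = (let Q = P(x := P x - 2) in Q(y := Q y + 1))"

fun valid_seq :: "('a \<Rightarrow> 'a \<Rightarrow> bool) \<Rightarrow> ('a \<Rightarrow> nat) \<Rightarrow> ('a \<times> 'a) list \<Rightarrow> bool" where
  "valid_seq E P [] = True"
| "valid_seq E P ((x, y) # \<sigma>) = (E x y \<and> 2 \<le> P x \<and> valid_seq E (move P x y) \<sigma>)"

fun apply_seq :: "('a \<Rightarrow> nat) \<Rightarrow> ('a \<times> 'a) list \<Rightarrow> ('a \<Rightarrow> nat)" where
  "apply_seq P [] = P"
| "apply_seq P ((x, y) # \<sigma>) = apply_seq (move P x y) \<sigma>"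

definition k_reachable :: "('a \<Rightarrow> 'a \<Rightarrow> bool) \<Rightarrow> ('a \<Rightarrow> nat) \<Rightarrow> 'a \<Rightarrow> nat \<Rightarrow> bool" where
  "k_reachable E P v k \<longleftrightarrow> (\<exists>\<sigma>. valid_seq E P \<sigma> \<and> k \<le> apply_seq P \<sigma> v)"

abbreviation reachable :: "('a \<Rightarrow> 'a \<Rightarrow> bool) \<Rightarrow> ('a \<Rightarrow> nat) \<Rightarrow> 'a \<Rightarrow> bool" where
  "reachable E P v \<equiv> k_reachable E P v 1"

definition reach :: "('a \<Rightarrow> 'a \<Rightarrow> bool) \<Rightarrow> ('a \<Rightarrow> nat) \<Rightarrow> 'a \<Rightarrow> nat" where
  "reach E P v = (GREATEST k. k_reachable E P v k)"

definition exc :: "('a \<Rightarrow> 'a \<Rightarrow> bool) \<Rightarrow> ('a \<Rightarrow> nat) \<Rightarrow> 'a \<Rightarrow> nat" where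
  "exc E P v = (if reachable E P v then reach E P v - 1 else 0)"

definition coop_vertex :: "('a \<Rightarrow> 'a \<Rightarrow> bool) \<Rightarrow> ('a \<Rightarrow> nat) \<Rightarrow> ('a \<Rightarrow> nat) \<Rightarrow> 'a \<Rightarrow> bool" where
  "coop_vertex E P U v \<longleftrightarrow> reachable E (dplus P U) v \<and> \<not> reachable E P v \<and> \<not> reachable E U v"

definition coop_excess :: "('a \<Rightarrow> 'a \<Rightarrow> bool) \<Rightarrow> ('a \<Rightarrow> nat) \<Rightarrow> ('a \<Rightarrow> nat) \<Rightarrow> 'a \<Rightarrow> int" where
  "coop_excess E P U v = int (exc E (dplus P U) v) - int (exc E P v) - int (exc E U v)"

definition utilized :: "('a \<times> 'a) list \<Rightarrow> 'a \<Rightarrow> bool" where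
  "utilized \<sigma> w \<longleftrightarrow> (\<exists>(x, y) \<in> set \<sigma>. w = x \<or> w = y)"

definition coop_used :: "('a \<Rightarrow> 'a \<Rightarrow> bool) \<Rightarrow> ('a \<Rightarrow> nat) \<Rightarrow> ('a \<Rightarrow> nat) \<Rightarrow> 'a \<Rightarrow> ('a \<times> 'a) list \<Rightarrow> nat" where
  "coop_used E P U v \<sigma> = card {w. coop_vertex E P U w \<and> (utilized \<sigma> w \<or> w = v)}"

definition Mval :: "('a \<Rightarrow> 'a \<Rightarrow> bool) \<Rightarrow> ('a \<Rightarrow> nat) \<Rightarrow> ('a \<Rightarrow> nat) \<Rightarrow> 'a \<Rightarrow> enat" where
  "Mval E P U v = (if k_reachable E (dplus P U) v 2
     then enat (LEAST n. \<exists>\<sigma>. valid_seq E (dplus P U) \<sigma> \<and> 2 \<le> apply_seq (dplus P U) \<sigma> v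
                          \<and> coop_used E P U v \<sigma> = n)
     else \<infinity>)"

end

theory Submission
  imports Defs
begin

text \<open>Choose a sequence that puts two pebbles on \<open>c\<close> utilizing only \<open>M(c)\<close> cooperation vertices,
  and a shortest one among these. Then \<open>c\<close> holds two pebbles only at the end, so it is never
  the source of a move; since a cooperation vertex starts empty, it receives exactly one pebble
  from a neighbour \<open>e\<close> earlier and the second from a neighbour \<open>f\<close> in the last move. The prefix
  before the move from \<open>e\<close> puts two pebbles on \<open>e\<close>; deleting that move from the sequence keeps
  it valid, because \<open>c\<close> is never a source, and puts two pebbles on \<open>f\<close>, four if \<open>e = f\<close>.
  Both sequences avoid \<open>c\<close>, so \<open>M\<close> drops strictly. Finally \<open>e\<close> and \<open>f\<close> are adjacent to \<open>c\<close>,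
  which is unreachable under \<open>P\<close> and under \<open>U\<close>, so neither is 2-reachable under \<open>P\<close> or \<open>U\<close>
  and their cooperation excess is their excess under \<open>P + U\<close>.\<close>

lemma apply_seq_append [simp]: "apply_seq Q (\<sigma> @ \<tau>) = apply_seq (apply_seq Q \<sigma>) \<tau>"
  by (induction Q \<sigma> rule: apply_seq.induct) auto

lemma valid_seq_append [simp]:
  "valid_seq E Q (\<sigma> @ \<tau>) \<longleftrightarrow> valid_seq E Q \<sigma> \<and> valid_seq E (apply_seq Q \<sigma>) \<tau>"
  by (induction E Q \<sigma> rule: valid_seq.induct) auto

lemma int_move:
  "2 \<le> Q x \<Longrightarrow>
   int (move Q x y w) = int (Q w) - (if w = x then 2 else 0) + (if w = y then 1 else 0)"
  by (auto simp: move_def Let_def)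

lemma valid_seq_shift:
  assumes "valid_seq E Q \<sigma>" and "\<forall>(x, y) \<in> set \<sigma>. Q x \<le> R x"
  shows "valid_seq E R \<sigma> \<and> (\<forall>w. int (apply_seq R \<sigma> w) = int (apply_seq Q \<sigma> w) + int (R w) - int (Q w))"
  using assms
proof (induction \<sigma> arbitrary: Q R)
  case Nil
  then show ?case by simp
next
  case (Cons p \<sigma>)
  obtain x y where p: "p = (x, y)" by fastforce
  have Qx: "2 \<le> Q x" and Exy: "E x y" and rest: "valid_seq E (move Q x y) \<sigma>"
    using Cons.prems p by auto
  have Rx: "2 \<le> R x" using Qx Cons.prems(2) p by force
  have diff: "int (move R x y w) = int (move Q x y w) + int (R w) - int (Q w)" for w
    using int_move[of Q x y w, OF Qx] int_move[of R x y w, OF Rx] by simp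
  have "\<forall>(x', y') \<in> set \<sigma>. move Q x y x' \<le> move R x y x'"
  proof clarify
    fix x' y' assume "(x', y') \<in> set \<sigma>"
    then have "Q x' \<le> R x'" using Cons.prems(2) by auto
    then show "move Q x y x' \<le> move R x y x'" using diff[of x'] by linarith
  qed
  from Cons.IH[OF rest this] show ?case using diff p Qx Rx Exy by simp
qed

lemma apply_seq_at_non_source:
  "\<forall>p \<in> set \<sigma>. fst p \<noteq> c \<Longrightarrow> apply_seq Q \<sigma> c = Q c + length (filter (\<lambda>p. snd p = c) \<sigma>)"
  by (induction Q \<sigma> rule: apply_seq.induct) (auto simp: move_def Let_def)

lemma not_source_if_below_two:
  "valid_seq E Q \<sigma> \<Longrightarrow> \<forall>n < length \<sigma>. apply_seq Q (take n \<sigma>) c < 2 \<Longrightarrow> \<forall>p \<in> set \<sigma>. fst p \<noteq> c"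
proof (induction \<sigma> arbitrary: Q)
  case Nil
  then show ?case by simp
next
  case (Cons p \<sigma>)
  obtain x y where p: "p = (x, y)" by fastforce
  have "x \<noteq> c" using Cons.prems(1) spec[OF Cons.prems(2), of 0] p by auto
  moreover have "\<forall>n < length \<sigma>. apply_seq (move Q x y) (take n \<sigma>) c < 2"
    using Cons.prems(2) p by (metis Suc_mono apply_seq.simps(2) length_Cons take_Suc_Cons)
  ultimately show ?case using Cons.IH[of "move Q x y"] Cons.prems(1) p by auto
qed

lemma valid_seq_skip_move:
  assumes valid: "valid_seq E Q (\<alpha> @ (e, c) # \<beta>)" and "\<forall>p \<in> set \<beta>. fst p \<noteq> c"
  shows "valid_seq E Q (\<alpha> @ \<beta>)"
    and "w \<noteq> c \<Longrightarrow> apply_seq Q (\<alpha> @ \<beta>) w = apply_seq Q (\<alpha> @ (e, c) # \<beta>) w + (if w = e then 2 else 0)"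
proof -
  define D where "D = apply_seq Q \<alpha>"
  have "2 \<le> D e" and "valid_seq E (move D e c) \<beta>" using valid by (auto simp: D_def)
  moreover have "\<forall>(x, y) \<in> set \<beta>. move D e c x \<le> D x"
    using assms(2) by (auto simp: move_def Let_def)
  ultimately have shifted: "valid_seq E D \<beta>"
    "\<And>w. int (apply_seq D \<beta> w) = int (apply_seq (move D e c) \<beta> w) + int (D w) - int (move D e c w)"
    using valid_seq_shift by blast+
  show "valid_seq E Q (\<alpha> @ \<beta>)" using valid shifted(1) by (simp add: D_def)
  show "apply_seq Q (\<alpha> @ \<beta>) w = apply_seq Q (\<alpha> @ (e, c) # \<beta>) w + (if w = e then 2 else 0)"
    if "w \<noteq> c"
    using shifted(2)[of w] int_move[of D e c w, OF \<open>2 \<le> D e\<close>] that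
    by (cases "w = e") (auto simp: D_def)
qed

lemma final_move_into:
  assumes valid: "valid_seq E Q \<sigma>" and "Q c < 2" and final: "2 \<le> apply_seq Q \<sigma> c"
    and below: "\<forall>n < length \<sigma>. apply_seq Q (take n \<sigma>) c < 2"
  obtains \<tau> f where "\<sigma> = \<tau> @ [(f, c)]" "f \<noteq> c" "apply_seq Q \<tau> c = 1" "\<forall>p \<in> set \<tau>. fst p \<noteq> c"
proof -
  have "\<sigma> \<noteq> []" using \<open>Q c < 2\<close> final by auto
  then obtain \<tau> f g where \<sigma>: "\<sigma> = \<tau> @ [(f, g)]" by (metis rev_exhaust surj_pair)
  define D where "D = apply_seq Q \<tau>"
  have "D c < 2" using below[rule_format, of "length \<tau>"] \<sigma> by (simp add: D_def)
  moreover have "2 \<le> D f" "2 \<le> move D f g c" using valid final \<sigma> by (simp_all add: D_def)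
  ultimately have "g = c" "f \<noteq> c" "D c = 1" by (auto simp: move_def Let_def split: if_splits)
  moreover have "\<forall>p \<in> set \<tau>. fst p \<noteq> c"
    using not_source_if_below_two[of E Q \<tau> c] valid below \<sigma> by (simp add: nth_append)
  ultimately show thesis using that \<sigma> by (simp add: D_def)
qed

lemma single_move_into:
  assumes "\<forall>p \<in> set \<tau>. fst p \<noteq> c" and "apply_seq Q \<tau> c = Q c + 1"
  obtains \<alpha> e \<beta> where "\<tau> = \<alpha> @ (e, c) # \<beta>" "\<forall>p \<in> set (\<alpha> @ \<beta>). snd p \<noteq> c"
proof -
  have one: "length (filter (\<lambda>p. snd p = c) \<tau>) = 1"
    using apply_seq_at_non_source[OF assms(1), of Q] assms(2) by simp
  then have "filter (\<lambda>p. snd p = c) \<tau> \<noteq> []" by auto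
  then have "\<exists>p \<in> set \<tau>. snd p = c" by (simp add: filter_empty_conv)
  then obtain \<alpha> p \<beta> where \<tau>: "\<tau> = \<alpha> @ p # \<beta>" and "snd p = c" and "\<forall>q \<in> set \<alpha>. snd q \<noteq> c"
    using split_list_first_prop[of \<tau> "\<lambda>p. snd p = c"] by blast
  moreover from this have "\<forall>q \<in> set \<beta>. snd q \<noteq> c"
    using one by (simp add: filter_empty_conv[symmetric])
  ultimately show thesis using that[of \<alpha> "fst p" \<beta>] by (metis Un_iff prod.collapse set_append)
qed

lemma moves_into_first_double:
  assumes valid: "valid_seq E Q \<sigma>" and "Q c = 0" and final: "2 \<le> apply_seq Q \<sigma> c"
    and below: "\<forall>n < length \<sigma>. apply_seq Q (take n \<sigma>) c < 2"
  obtains \<alpha> e \<beta> f where "\<sigma> = \<alpha> @ (e, c) # \<beta> @ [(f, c)]" "e \<noteq> c" "f \<noteq> c"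
    "\<not> utilized (\<alpha> @ \<beta>) c" "valid_seq E Q (\<alpha> @ \<beta>)"
    "2 \<le> apply_seq Q \<alpha> e" "2 \<le> apply_seq Q (\<alpha> @ \<beta>) f"
    "e = f \<Longrightarrow> 4 \<le> apply_seq Q (\<alpha> @ \<beta>) f"
proof -
  obtain \<tau> f where \<sigma>: "\<sigma> = \<tau> @ [(f, c)]" and "f \<noteq> c" and "apply_seq Q \<tau> c = 1"
    and no_source: "\<forall>p \<in> set \<tau>. fst p \<noteq> c"
    using final_move_into[OF valid _ final below] \<open>Q c = 0\<close> by auto
  then obtain \<alpha> e \<beta> where \<tau>: "\<tau> = \<alpha> @ (e, c) # \<beta>" and no_target: "\<forall>p \<in> set (\<alpha> @ \<beta>). snd p \<noteq> c"
    using single_move_into[OF no_source, of Q] \<open>Q c = 0\<close> \<open>apply_seq Q \<tau> c = 1\<close> by (metis add_0)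
  have valid_\<tau>: "valid_seq E Q (\<alpha> @ (e, c) # \<beta>)" and f: "2 \<le> apply_seq Q \<tau> f"
    using valid \<sigma> \<tau> by simp_all
  have "e \<noteq> c" using no_source \<tau> by auto
  have "\<forall>p \<in> set (\<alpha> @ \<beta>). fst p \<noteq> c \<and> snd p \<noteq> c" using no_source no_target \<tau> by auto
  then have avoids_c: "\<not> utilized (\<alpha> @ \<beta>) c" unfolding utilized_def by fastforce
  have skip: "valid_seq E Q (\<alpha> @ \<beta>)"
    "apply_seq Q (\<alpha> @ \<beta>) f = apply_seq Q \<tau> f + (if f = e then 2 else 0)"
    using valid_seq_skip_move[OF valid_\<tau>] no_source \<tau> \<open>f \<noteq> c\<close> by auto
  have "2 \<le> apply_seq Q \<alpha> e" using valid_\<tau> by simp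
  moreover have "2 \<le> apply_seq Q (\<alpha> @ \<beta>) f" and "e = f \<Longrightarrow> 4 \<le> apply_seq Q (\<alpha> @ \<beta>) f"
    using skip(2) f by auto
  moreover have "\<sigma> = \<alpha> @ (e, c) # \<beta> @ [(f, c)]" using \<sigma> \<tau> by simp
  ultimately show thesis using that \<open>e \<noteq> c\<close> \<open>f \<noteq> c\<close> avoids_c skip(1) by blast
qed

lemma dist_on_apply_seq:
  "simple_graph V E \<Longrightarrow> dist_on V Q \<Longrightarrow> valid_seq E Q \<sigma> \<Longrightarrow> dist_on V (apply_seq Q \<sigma>)"
proof (induction \<sigma> arbitrary: Q)
  case Nil
  then show ?case by simp
next
  case (Cons p \<sigma>)
  obtain x y where p: "p = (x, y)" by fastforce
  have "dist_on V (move Q x y)"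
    using Cons.prems p by (auto simp: dist_on_def move_def Let_def simple_graph_def)
  then show ?case using Cons p by simp
qed

lemma sum_move:
  assumes "simple_graph V E" and "E x y" and "2 \<le> Q x"
  shows "sum (move Q x y) V + 1 = sum Q V"
proof -
  have "finite V" "x \<in> V" "y \<in> V" using assms(1,2) by (auto simp: simple_graph_def)
  have "int (sum (move Q x y) V)
      = (\<Sum>w\<in>V. int (Q w)) - (\<Sum>w\<in>V. if w = x then 2 else 0) + (\<Sum>w\<in>V. if w = y then 1 else 0)"
    using int_move[of Q x y, OF assms(3)] by (simp add: of_nat_sum sum.distrib sum_subtractf)
  also have "\<dots> = int (sum Q V) - 1"
    using \<open>finite V\<close> \<open>x \<in> V\<close> \<open>y \<in> V\<close> by (simp add: of_nat_sum)
  finally show ?thesis by linarith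
qed

lemma sum_apply_seq_le:
  "simple_graph V E \<Longrightarrow> valid_seq E Q \<sigma> \<Longrightarrow> sum (apply_seq Q \<sigma>) V \<le> sum Q V"
proof (induction \<sigma> arbitrary: Q)
  case Nil
  then show ?case by simp
next
  case (Cons p \<sigma>)
  obtain x y where p: "p = (x, y)" by fastforce
  then show ?case using Cons sum_move[of V E x y Q] by fastforce
qed

lemma k_reachable_le_sum:
  assumes G: "simple_graph V E" and "dist_on V Q" and "k_reachable E Q v j"
  shows "j \<le> sum Q V"
proof -
  obtain \<sigma> where valid: "valid_seq E Q \<sigma>" and "j \<le> apply_seq Q \<sigma> v"
    using assms(3) unfolding k_reachable_def by blast
  moreover have "apply_seq Q \<sigma> v \<le> sum (apply_seq Q \<sigma>) V"
    using dist_on_apply_seq[OF G assms(2) valid] G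
    by (cases "v \<in> V") (auto simp: dist_on_def simple_graph_def intro: member_le_sum)
  ultimately show ?thesis using sum_apply_seq_le[OF G valid] by linarith
qed

lemma k_reachable_mono: "k_reachable E Q v j \<Longrightarrow> i \<le> j \<Longrightarrow> k_reachable E Q v i"
  unfolding k_reachable_def by auto

lemma k_reachable_0: "k_reachable E Q v 0"
  unfolding k_reachable_def by (rule exI[of _ "[]"]) simp

lemma exc_eq_0_if_not_2_reachable: "\<not> k_reachable E Q v 2 \<Longrightarrow> exc E Q v = 0"
proof -
  assume "\<not> k_reachable E Q v 2"
  then have le_1: "k_reachable E Q v j \<Longrightarrow> j \<le> 1" for j using k_reachable_mono[of E Q v j 2] by force
  have "reach E Q v \<le> 1"
    unfolding reach_def using le_1 GreatestI_nat[of "k_reachable E Q v", OF k_reachable_0 le_1] by blast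
  then show ?thesis by (simp add: exc_def)
qed

lemma le_exc:
  assumes "simple_graph V E" and "dist_on V Q" and "k_reachable E Q v j"
  shows "j - 1 \<le> exc E Q v"
proof (cases "j = 0")
  case False
  have "j \<le> reach E Q v"
    unfolding reach_def using assms(3) k_reachable_le_sum[OF assms(1,2)] by (rule Greatest_le_nat)
  moreover have "reachable E Q v" using k_reachable_mono[OF assms(3)] False by simp
  ultimately show ?thesis by (simp add: exc_def)
qed simp

lemma reachable_if_adjacent_2_reachable: "k_reachable E Q t 2 \<Longrightarrow> E t c \<Longrightarrow> reachable E Q c"
proof -
  assume "k_reachable E Q t 2" "E t c"
  then obtain \<sigma> where "valid_seq E Q \<sigma>" "2 \<le> apply_seq Q \<sigma> t" unfolding k_reachable_def by blast
  then have "valid_seq E Q (\<sigma> @ [(t, c)]) \<and> 1 \<le> apply_seq Q (\<sigma> @ [(t, c)]) c"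
    using \<open>E t c\<close> by (simp add: move_def Let_def)
  then show ?thesis unfolding k_reachable_def by blast
qed

text \<open>A neighbour of a vertex that is unreachable under \<open>P\<close> and under \<open>U\<close> has excess \<open>0\<close>
  under both, so its cooperation excess is its excess under \<open>P + U\<close>.\<close>

lemma coop_excess_of_neighbour:
  assumes "simple_graph V E" and "dist_on V (dplus P U)" and "E t c"
    and "\<not> reachable E P c" and "\<not> reachable E U c" and "k_reachable E (dplus P U) t j"
  shows "int j - 1 \<le> coop_excess E P U t"
proof -
  have "exc E P t = 0" "exc E U t = 0"
    using assms(3-5) reachable_if_adjacent_2_reachable exc_eq_0_if_not_2_reachable by metis+
  moreover have "j - 1 \<le> exc E (dplus P U) t" using le_exc[OF assms(1,2,6)] .
  ultimately show ?thesis unfolding coop_excess_def by linarith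
qed

lemma coop_vertex_empty: "coop_vertex E P U c \<Longrightarrow> dplus P U c = 0"
proof -
  assume coop: "coop_vertex E P U c"
  have "R c = 0" if "\<not> reachable E R c" for R
  proof (rule ccontr)
    assume "R c \<noteq> 0"
    then have "valid_seq E R [] \<and> 1 \<le> apply_seq R [] c" by simp
    with that show False unfolding k_reachable_def by blast
  qed
  then show ?thesis using coop by (simp add: coop_vertex_def dplus_def)
qed

lemma coop_vertex_in:
  assumes "simple_graph V E" and "dist_on V (dplus P U)" and "coop_vertex E P U w"
  shows "w \<in> V"
proof (rule ccontr)
  assume "w \<notin> V"
  obtain \<sigma> where "valid_seq E (dplus P U) \<sigma>" "1 \<le> apply_seq (dplus P U) \<sigma> w"
    using assms(3) unfolding coop_vertex_def k_reachable_def by blast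
  with dist_on_apply_seq[OF assms(1,2)] \<open>w \<notin> V\<close> show False by (fastforce simp: dist_on_def)
qed

lemma finite_coop_vertices:
  assumes "simple_graph V E" and "dist_on V (dplus P U)"
  shows "finite {w. coop_vertex E P U w}"
proof (rule finite_subset)
  show "{w. coop_vertex E P U w} \<subseteq> V" using coop_vertex_in[OF assms] by blast
  show "finite V" using assms(1) by (simp add: simple_graph_def)
qed

lemma utilized_mono: "set \<rho> \<subseteq> set \<sigma> \<Longrightarrow> utilized \<rho> w \<Longrightarrow> utilized \<sigma> w"
  unfolding utilized_def by blast

lemma coop_used_mono:
  "finite {w. coop_vertex E P U w} \<Longrightarrow> set \<rho> \<subseteq> set \<sigma> \<Longrightarrow> coop_used E P U v \<rho> \<le> coop_used E P U v \<sigma>"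
  unfolding coop_used_def by (rule card_mono) (auto dest: utilized_mono intro: finite_subset)

text \<open>\<open>c\<close> itself is always counted for \<open>\<sigma>\<close>, but for \<open>\<rho>\<close> only if \<open>\<rho>\<close> utilizes it.\<close>

lemma coop_used_less:
  assumes "finite {w. coop_vertex E P U w}" and "set \<rho> \<subseteq> set \<sigma>" and "coop_vertex E P U c"
    and "\<not> utilized \<rho> c" and "utilized \<sigma> t" and "t \<noteq> c"
  shows "coop_used E P U t \<rho> < coop_used E P U c \<sigma>"
  unfolding coop_used_def
proof (rule psubset_card_mono)
  show "finite {w. coop_vertex E P U w \<and> (utilized \<sigma> w \<or> w = c)}"
    using assms(1) by (auto intro: finite_subset)
  show "{w. coop_vertex E P U w \<and> (utilized \<rho> w \<or> w = t)}
      \<subset> {w. coop_vertex E P U w \<and> (utilized \<sigma> w \<or> w = c)}"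
  proof -
    have "utilized \<sigma> w" if "utilized \<rho> w" for w using utilized_mono[OF assms(2) that] .
    then show ?thesis using assms(3-6) by blast
  qed
qed

lemma Mval_le_coop_used:
  assumes "valid_seq E (dplus P U) \<rho>" and "2 \<le> apply_seq (dplus P U) \<rho> t"
  shows "Mval E P U t \<le> enat (coop_used E P U t \<rho>)"
proof -
  have "k_reachable E (dplus P U) t 2" using assms unfolding k_reachable_def by blast
  moreover have "(LEAST n. \<exists>\<sigma>. valid_seq E (dplus P U) \<sigma> \<and> 2 \<le> apply_seq (dplus P U) \<sigma> t
                          \<and> coop_used E P U t \<sigma> = n) \<le> coop_used E P U t \<rho>"
    by (rule Least_le) (use assms in blast)
  ultimately show ?thesis by (simp add: Mval_def)
qed

lemma Mval_attained:
  assumes "k_reachable E (dplus P U) c 2"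
  obtains \<sigma> where "valid_seq E (dplus P U) \<sigma>" "2 \<le> apply_seq (dplus P U) \<sigma> c"
    "Mval E P U c = enat (coop_used E P U c \<sigma>)"
proof -
  let ?attains = "\<lambda>n. \<exists>\<sigma>. valid_seq E (dplus P U) \<sigma> \<and> 2 \<le> apply_seq (dplus P U) \<sigma> c
                          \<and> coop_used E P U c \<sigma> = n"
  have "\<exists>n. ?attains n" using assms unfolding k_reachable_def by blast
  then have "?attains (Least ?attains)" by (rule LeastI_ex)
  moreover have "Mval E P U c = enat (Least ?attains)" using assms by (simp add: Mval_def)
  ultimately show thesis using that by auto
qed

text \<open>A prefix of an optimal sequence that already puts two pebbles on \<open>c\<close> is optimal too,
  so a shortest optimal sequence has no such proper prefix.\<close>

lemma shortest_optimal_sequence: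
  assumes "finite {w. coop_vertex E P U w}" and "k_reachable E (dplus P U) c 2"
  obtains \<sigma> where "valid_seq E (dplus P U) \<sigma>" "2 \<le> apply_seq (dplus P U) \<sigma> c"
    "Mval E P U c = enat (coop_used E P U c \<sigma>)"
    "\<forall>n < length \<sigma>. apply_seq (dplus P U) (take n \<sigma>) c < 2"
proof -
  define optimal where "optimal \<sigma> \<longleftrightarrow> valid_seq E (dplus P U) \<sigma> \<and> 2 \<le> apply_seq (dplus P U) \<sigma> c
      \<and> Mval E P U c = enat (coop_used E P U c \<sigma>)" for \<sigma>
  obtain \<sigma>\<^sub>0 where "optimal \<sigma>\<^sub>0" using Mval_attained[OF assms(2)] unfolding optimal_def by blast
  then obtain \<sigma> where opt: "optimal \<sigma>" and shortest: "\<And>\<rho>. optimal \<rho> \<Longrightarrow> length \<sigma> \<le> length \<rho>"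
    using ex_has_least_nat[of optimal \<sigma>\<^sub>0 length] by blast
  have "apply_seq (dplus P U) (take n \<sigma>) c < 2" if "n < length \<sigma>" for n
  proof (rule ccontr)
    assume "\<not> apply_seq (dplus P U) (take n \<sigma>) c < 2"
    then have two: "2 \<le> apply_seq (dplus P U) (take n \<sigma>) c" by simp
    have valid: "valid_seq E (dplus P U) (take n \<sigma>)"
      using opt append_take_drop_id[of n \<sigma>] valid_seq_append unfolding optimal_def by metis
    have "Mval E P U c \<le> enat (coop_used E P U c (take n \<sigma>))"
      using Mval_le_coop_used[OF valid two] .
    moreover have "coop_used E P U c (take n \<sigma>) \<le> coop_used E P U c \<sigma>"
      using coop_used_mono[OF assms(1) set_take_subset] .
    ultimately have "optimal (take n \<sigma>)"
      using opt valid two unfolding optimal_def by auto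
    then show False using shortest[of "take n \<sigma>"] that by simp
  qed
  then show thesis using that opt unfolding optimal_def by blast
qed

lemma Mval_less:
  assumes "finite {w. coop_vertex E P U w}" and "coop_vertex E P U c"
    and "Mval E P U c = enat (coop_used E P U c \<sigma>)"
    and "valid_seq E (dplus P U) \<rho>" and "2 \<le> apply_seq (dplus P U) \<rho> t"
    and "set \<rho> \<subseteq> set \<sigma>" and "\<not> utilized \<rho> c" and "utilized \<sigma> t" and "t \<noteq> c"
  shows "Mval E P U t < Mval E P U c"
proof -
  have "Mval E P U t \<le> enat (coop_used E P U t \<rho>)" using Mval_le_coop_used[OF assms(4,5)] .
  also have "\<dots> < enat (coop_used E P U c \<sigma>)"
    using coop_used_less[OF assms(1,6,2,7-9)] by simp
  finally show ?thesis using assms(3) by simp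
qed

lemma coop_vertex_feeding_neighbours:
  assumes G: "simple_graph V E" and D: "dist_on V (dplus P U)"
    and coop: "coop_vertex E P U c" and two: "k_reachable E (dplus P U) c 2"
  shows "(\<exists>e f. e \<noteq> f \<and> E c e \<and> E c f \<and> coop_excess E P U e \<ge> 1 \<and> coop_excess E P U f \<ge> 1
            \<and> Mval E P U e < Mval E P U c \<and> Mval E P U f < Mval E P U c)
       \<or> (\<exists>d. E c d \<and> coop_excess E P U d \<ge> 3 \<and> Mval E P U d < Mval E P U c)"
proof -
  let ?Q = "dplus P U"
  have fin: "finite {w. coop_vertex E P U w}" using finite_coop_vertices[OF G D] .
  obtain \<sigma> where valid: "valid_seq E ?Q \<sigma>" and final: "2 \<le> apply_seq ?Q \<sigma> c"
    and opt: "Mval E P U c = enat (coop_used E P U c \<sigma>)"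
    and below: "\<forall>n < length \<sigma>. apply_seq ?Q (take n \<sigma>) c < 2"
    using shortest_optimal_sequence[OF fin two] by blast
  obtain \<alpha> e \<beta> f where \<sigma>: "\<sigma> = \<alpha> @ (e, c) # \<beta> @ [(f, c)]" and "e \<noteq> c" "f \<noteq> c"
    and avoids_c: "\<not> utilized (\<alpha> @ \<beta>) c" and valid_\<alpha>\<beta>: "valid_seq E ?Q (\<alpha> @ \<beta>)"
    and e: "2 \<le> apply_seq ?Q \<alpha> e" and f: "2 \<le> apply_seq ?Q (\<alpha> @ \<beta>) f"
    and e_eq_f: "e = f \<Longrightarrow> 4 \<le> apply_seq ?Q (\<alpha> @ \<beta>) f"
    using moves_into_first_double[OF valid coop_vertex_empty[OF coop] final below] by blast
  have "E e c" "E f c" using valid \<sigma> by simp_all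
  then have "E c e" "E c f" using G by (simp_all add: simple_graph_def)
  have "utilized \<sigma> e" "utilized \<sigma> f" using \<sigma> unfolding utilized_def by force+
  have "Mval E P U e < Mval E P U c"
    using Mval_less[OF fin coop opt _ e _ _ \<open>utilized \<sigma> e\<close> \<open>e \<noteq> c\<close>] valid_\<alpha>\<beta> avoids_c \<sigma>
    by (auto simp: utilized_def)
  moreover have "Mval E P U f < Mval E P U c"
    using Mval_less[OF fin coop opt valid_\<alpha>\<beta> f _ avoids_c \<open>utilized \<sigma> f\<close> \<open>f \<noteq> c\<close>] \<sigma> by auto
  moreover have excess: "int j - 1 \<le> coop_excess E P U t" if "E t c" "k_reachable E ?Q t j" for t j
    using coop_excess_of_neighbour[OF G D that(1) _ _ that(2)] coop by (simp add: coop_vertex_def)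
  moreover have "coop_excess E P U e \<ge> 1" "coop_excess E P U f \<ge> 1"
    using excess[OF \<open>E e c\<close>, of 2] excess[OF \<open>E f c\<close>, of 2] e f valid_\<alpha>\<beta>
    unfolding k_reachable_def by fastforce+
  moreover have "e = f \<Longrightarrow> coop_excess E P U f \<ge> 3"
    using excess[OF \<open>E f c\<close>, of 4] e_eq_f valid_\<alpha>\<beta> unfolding k_reachable_def by fastforce
  ultimately show ?thesis using \<open>E c e\<close> \<open>E c f\<close> by (cases "e = f") auto
qed

theorem claim3p5:
  fixes V :: "'a set" and E :: "'a \<Rightarrow> 'a \<Rightarrow> bool" and P :: "'a \<Rightarrow> nat"
    and u c :: 'a and k :: nat
  assumes "simple_graph V E"
    and "dist_on V P"
    and "u \<in> V" and "k > 0"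
    and "P u = 0"
    and "coop_vertex E P (\<lambda>x. if x = u then k else 0) c"
    and "k_reachable E (dplus P (\<lambda>x. if x = u then k else 0)) c 2"
  shows "(\<exists>e f. e \<noteq> f \<and> E c e \<and> E c f
            \<and> coop_excess E P (\<lambda>x. if x = u then k else 0) e \<ge> 1
            \<and> coop_excess E P (\<lambda>x. if x = u then k else 0) f \<ge> 1
            \<and> Mval E P (\<lambda>x. if x = u then k else 0) e < Mval E P (\<lambda>x. if x = u then k else 0) c
            \<and> Mval E P (\<lambda>x. if x = u then k else 0) f < Mval E P (\<lambda>x. if x = u then k else 0) c)
       \<or> (\<exists>d. E c d \<and> coop_excess E P (\<lambda>x. if x = u then k else 0) d \<ge> 3
            \<and> Mval E P (\<lambda>x. if x = u then k else 0) d < Mval E P (\<lambda>x. if x = u then k else 0) c)"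
proof (rule coop_vertex_feeding_neighbours)
  show "dist_on V (dplus P (\<lambda>x. if x = u then k else 0))"
    using assms(2,3) by (auto simp: dist_on_def dplus_def)
qed (use assms in auto)

end
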